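(* Let $\Theta$ be a space of input histories satisfying the free-choice condition and let $\hat\Theta\in\mathrm{CC}(\Theta)$ be a causal completion of $\Theta$. Then $E^{\hat\Theta}=E^\Theta$ and $I^{\hat\Theta}_\omega=I^\Theta_\omega$ for all $\omega\in E^\Theta$.
   Context: A partial function is a function $f$ with domain $\mathrm{dom}(f)$ a subset of an index set, values in given sets; ordered by restriction. Compatible = agreeing on common domain; a compatible set $\mathcal F$ has join $\bigvee\mathcal F$ (union). $\Theta$ is $\vee$-prime if for compatible $\mathcal F\subseteq\Theta$ with $\bigvee\mathcal F\in\Theta$ we have $\bigvee\mathcal F\in\mathcal F$. A space of input histories is a finite $\vee$-prime set of partial functions; $E^\Theta=\bigcup_{h\in\Theta}\mathrm{dom}(h)$, $I^\Theta_\omega=\{h(\omega):h\in\Theta,\omega\in\mathrm{dom}(h)\}$, $\mathrm{Ext}(\Theta)=\{\bigvee\mathcal F:\emptyset\ne\mathcal F\subseteq\Theta\text{ compatible}\}$. Free-choice: maximal elements of $\mathrm{Ext}(\Theta)$ are exactly the total functions in $\prod_{\omega\in E^\Theta}I^\Theta_\omega$. $\mathrm{tips}_\Theta(h)=\mathrm{dom}(h)\setminus\bigcup\{\mathrm{dom}(k):k\in\mathrm{Ext}(\Theta),k<h\}$. Causally complete: free-choice and $|\mathrm{tips}_\Theta(h)|=1$ for all $h\in\Theta$. Spaces are ordered by $\Theta_1\le\Theta_2$ iff $\mathrm{Ext}(\Theta_1)\supseteq\mathrm{Ext}(\Theta_2)$. The causal completions $\mathrm{CC}(\Theta)$ are the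 maximal elements of $\{\Theta_1\le\Theta:\Theta_1\text{ causally complete}\}$. *)

theory Defs
  imports Main
begin

text \<open>Partial functions from an index type 'e to a value type 'v are modelled as maps
  'e \<rightharpoonup> 'v; the order "extension by restriction" is map_le.\<close>

definition compatible :: "('e \<rightharpoonup> 'v) set \<Rightarrow> bool" where
  "compatible F \<longleftrightarrow> (\<forall>f\<in>F. \<forall>g\<in>F. \<forall>x\<in>dom f \<inter> dom g. f x = g x)"

definition join :: "('e \<rightharpoonup> 'v) set \<Rightarrow> ('e \<rightharpoonup> 'v)" where
  "join F = (\<lambda>x. if \<exists>f\<in>F. x \<in> dom f then (SOME f. f \<in> F \<and> x \<in> dom f) x else None)"

definition vee_prime :: "('e \<rightharpoonup> 'v) set \<Rightarrow> bool" where
  "vee_prime \<Theta> \<longleftrightarrow> (\<forall>F. F \<subseteq> \<Theta> \<and> compatible F \<and> join F \<in> \<Theta> \<longrightarrow> join F \<in> F)"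

definition space_of_input_histories :: "('e \<rightharpoonup> 'v) set \<Rightarrow> bool" where
  "space_of_input_histories \<Theta> \<longleftrightarrow> finite \<Theta> \<and> vee_prime \<Theta>"

definition events :: "('e \<rightharpoonup> 'v) set \<Rightarrow> 'e set" where
  "events \<Theta> = (\<Union>h\<in>\<Theta>. dom h)"

definition inputs :: "('e \<rightharpoonup> 'v) set \<Rightarrow> 'e \<Rightarrow> 'v set" where
  "inputs \<Theta> \<omega> = {v. \<exists>h\<in>\<Theta>. \<omega> \<in> dom h \<and> h \<omega> = Some v}"

definition Ext :: "('e \<rightharpoonup> 'v) set \<Rightarrow> ('e \<rightharpoonup> 'v) set" where
  "Ext \<Theta> = {join F | F. F \<noteq> {} \<and> F \<subseteq> \<Theta> \<and> compatible F}"

definition free_choice :: "('e \<rightharpoonup> 'v) set \<Rightarrow> bool" where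
  "free_choice \<Theta> \<longleftrightarrow>
     {k. k \<in> Ext \<Theta> \<and> (\<forall>k'\<in>Ext \<Theta>. k \<subseteq>\<^sub>m k' \<longrightarrow> k' = k)}
     = {k. dom k = events \<Theta> \<and> (\<forall>\<omega>\<in>events \<Theta>. the (k \<omega>) \<in> inputs \<Theta> \<omega>)}"

definition tips :: "('e \<rightharpoonup> 'v) set \<Rightarrow> ('e \<rightharpoonup> 'v) \<Rightarrow> 'e set" where
  "tips \<Theta> h = dom h - (\<Union>{dom k | k. k \<in> Ext \<Theta> \<and> k \<subseteq>\<^sub>m h \<and> k \<noteq> h})"

definition causally_complete :: "('e \<rightharpoonup> 'v) set \<Rightarrow> bool" where
  "causally_complete \<Theta> \<longleftrightarrow> free_choice \<Theta> \<and> (\<forall>h\<in>\<Theta>. card (tips \<Theta> h) = 1)"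

definition space_le :: "('e \<rightharpoonup> 'v) set \<Rightarrow> ('e \<rightharpoonup> 'v) set \<Rightarrow> bool" where
  "space_le \<Theta>1 \<Theta>2 \<longleftrightarrow> Ext \<Theta>2 \<subseteq> Ext \<Theta>1"

definition causal_completions :: "('e \<rightharpoonup> 'v) set \<Rightarrow> ('e \<rightharpoonup> 'v) set set" where
  "causal_completions \<Theta> =
     {\<Theta>1. space_of_input_histories \<Theta>1 \<and> space_le \<Theta>1 \<Theta> \<and> causally_complete \<Theta>1 \<and>
        (\<forall>\<Theta>2. space_of_input_histories \<Theta>2 \<and> space_le \<Theta>2 \<Theta> \<and> causally_complete \<Theta>2 \<and>
               space_le \<Theta>1 \<Theta>2 \<longrightarrow> space_le \<Theta>2 \<Theta>1)}"

end

theory Submission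
  imports Defs
begin

text \<open>Let \<open>\<Theta>'\<close> consist of the histories of the completion \<open>\<hat>\<Theta>\<close> all of whose values are
  inputs of \<open>\<Theta>\<close>. Passing to a smaller history preserves this property, so \<open>Ext \<Theta>'\<close> is exactly
  the part of \<open>Ext \<hat>\<Theta>\<close> with it, and therefore still contains \<open>Ext \<Theta>\<close>. Consequently \<open>\<Theta>'\<close> has
  the events and inputs of \<open>\<Theta>\<close>, is free-choice because \<open>\<Theta>\<close> is, and has the same tips as \<open>\<hat>\<Theta>\<close>:
  it is a causally complete space lying between \<open>\<Theta>\<close> and \<open>\<hat>\<Theta>\<close>. Maximality of \<open>\<hat>\<Theta>\<close> gives
  \<open>Ext \<hat>\<Theta> \<subseteq> Ext \<Theta>'\<close>, so every history of \<open>\<hat>\<Theta>\<close> takes its values among the inputs of \<open>\<Theta>\<close>,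
  which forces the events and inputs of \<open>\<hat>\<Theta>\<close> to be those of \<open>\<Theta>\<close>.\<close>

lemma join_eq_Some:
  assumes "compatible F" "f \<in> F" "f x = Some v"
  shows "join F x = Some v"
proof -
  have ex: "\<exists>f\<in>F. x \<in> dom f" using assms(2,3) by blast
  let ?g = "SOME f. f \<in> F \<and> x \<in> dom f"
  have "?g \<in> F \<and> x \<in> dom ?g" using someI_ex[OF ex[unfolded Bex_def]] .
  then have "?g x = f x" using assms unfolding compatible_def by blast
  then show ?thesis using ex assms(3) unfolding join_def by simp
qed

lemma join_eq_SomeD:
  assumes "join F x = Some v"
  shows "\<exists>f\<in>F. f x = Some v"
proof -
  have ex: "\<exists>f\<in>F. x \<in> dom f" using assms unfolding join_def by (auto split: if_splits)
  let ?g = "SOME f. f \<in> F \<and> x \<in> dom f"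
  have "?g \<in> F \<and> x \<in> dom ?g" using someI_ex[OF ex[unfolded Bex_def]] .
  moreover have "join F x = ?g x" using ex unfolding join_def by simp
  ultimately show ?thesis using assms by auto
qed

lemma map_le_join: "compatible F \<Longrightarrow> f \<in> F \<Longrightarrow> f \<subseteq>\<^sub>m join F"
  unfolding map_le_def using join_eq_Some by fastforce

lemma join_singleton: "join {h} = h"
proof
  fix x
  show "join {h} x = h x"
  proof (cases "h x")
    case None
    then show ?thesis by (auto simp: join_def)
  next
    case (Some v)
    have "join {h} x = Some v"
      by (rule join_eq_Some[of "{h}" h]) (simp_all add: compatible_def Some)
    then show ?thesis using Some by simp
  qed
qed

lemma subset_Ext: "\<Theta> \<subseteq> Ext \<Theta>"
proof
  fix h assume "h \<in> \<Theta>"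
  moreover have "compatible {h}" by (simp add: compatible_def)
  ultimately have "join {h} \<in> Ext \<Theta>" unfolding Ext_def by auto
  then show "h \<in> Ext \<Theta>" by (simp only: join_singleton)
qed

lemma Ext_mono: "A \<subseteq> B \<Longrightarrow> Ext A \<subseteq> Ext B"
  unfolding Ext_def by blast

lemma Ext_eq_SomeD:
  assumes "k \<in> Ext \<Theta>" "k x = Some v"
  shows "\<exists>h\<in>\<Theta>. h x = Some v"
proof -
  obtain F where F: "k = join F" "F \<subseteq> \<Theta>" using assms(1) unfolding Ext_def by auto
  then obtain h where "h \<in> F" "h x = Some v" using join_eq_SomeD assms(2) by metis
  then show ?thesis using F(2) by auto
qed

lemma inputs_iff: "v \<in> inputs \<Theta> \<omega> \<longleftrightarrow> (\<exists>h\<in>\<Theta>. h \<omega> = Some v)"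
  unfolding inputs_def by auto

lemma events_eq_inputs_nonempty: "events \<Theta> = {\<omega>. inputs \<Theta> \<omega> \<noteq> {}}"
  unfolding events_def inputs_def by fastforce

definition within_inputs :: "('e \<rightharpoonup> 'v) set \<Rightarrow> ('e \<rightharpoonup> 'v) \<Rightarrow> bool" where
  "within_inputs \<Theta> h \<longleftrightarrow> (\<forall>\<omega> v. h \<omega> = Some v \<longrightarrow> v \<in> inputs \<Theta> \<omega>)"

lemma within_inputs_if_mem: "h \<in> \<Theta> \<Longrightarrow> within_inputs \<Theta> h"
  unfolding within_inputs_def inputs_iff by blast

lemma within_inputs_map_le: "within_inputs \<Theta> h \<Longrightarrow> k \<subseteq>\<^sub>m h \<Longrightarrow> within_inputs \<Theta> k"
  unfolding within_inputs_def map_le_def by (metis domI)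

lemma within_inputs_Ext:
  assumes "k \<in> Ext S" "\<forall>h\<in>S. within_inputs \<Theta> h"
  shows "within_inputs \<Theta> k"
  unfolding within_inputs_def
proof (intro allI impI)
  fix \<omega> v
  assume "k \<omega> = Some v"
  then obtain h where "h \<in> S" "h \<omega> = Some v" using Ext_eq_SomeD assms(1) by metis
  then show "v \<in> inputs \<Theta> \<omega>" using assms(2) unfolding within_inputs_def by blast
qed

lemma dom_subset_events_if_within_inputs: "within_inputs \<Theta> h \<Longrightarrow> dom h \<subseteq> events \<Theta>"
  unfolding within_inputs_def events_eq_inputs_nonempty by blast

lemma inputs_eq_if_within_inputs:
  assumes "\<forall>h\<in>S. within_inputs \<Theta> h" "\<Theta> \<subseteq> Ext S"
  shows "inputs S = inputs \<Theta>"
proof (intro ext equalityI subsetI)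
  fix \<omega> v
  assume "v \<in> inputs S \<omega>"
  then obtain h where "h \<in> S" "h \<omega> = Some v" unfolding inputs_iff ..
  moreover have "within_inputs \<Theta> h" using assms(1) \<open>h \<in> S\<close> ..
  ultimately show "v \<in> inputs \<Theta> \<omega>" unfolding within_inputs_def by blast
next
  fix \<omega> v
  assume "v \<in> inputs \<Theta> \<omega>"
  then obtain h where "h \<in> \<Theta>" "h \<omega> = Some v" unfolding inputs_iff ..
  moreover have "h \<in> Ext S" using assms(2) \<open>h \<in> \<Theta>\<close> ..
  ultimately obtain k where "k \<in> S" "k \<omega> = Some v" using Ext_eq_SomeD by metis
  then show "v \<in> inputs S \<omega>" unfolding inputs_iff by blast
qed

lemma Ext_filter_within_inputs: "Ext {h \<in> S. within_inputs \<Theta> h} = {k \<in> Ext S. within_inputs \<Theta> k}"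
proof (intro equalityI subsetI CollectI conjI)
  fix k
  assume k: "k \<in> Ext {h \<in> S. within_inputs \<Theta> h}"
  show "k \<in> Ext S" using k Ext_mono[of "{h \<in> S. within_inputs \<Theta> h}" S] by blast
  show "within_inputs \<Theta> k" using k by (rule within_inputs_Ext) blast
next
  fix k
  assume "k \<in> {k \<in> Ext S. within_inputs \<Theta> k}"
  then have k: "k \<in> Ext S" and within: "within_inputs \<Theta> k" by auto
  obtain F where F: "k = join F" "F \<noteq> {}" "F \<subseteq> S" "compatible F"
    using k unfolding Ext_def by auto
  have "F \<subseteq> {h \<in> S. within_inputs \<Theta> h}"
    using F within within_inputs_map_le map_le_join by blast
  then show "k \<in> Ext {h \<in> S. within_inputs \<Theta> h}" using F unfolding Ext_def by auto
qed

lemma Ext_subset_filter_within_inputs: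
  assumes "Ext \<Theta> \<subseteq> Ext S"
  shows "Ext \<Theta> \<subseteq> Ext {h \<in> S. within_inputs \<Theta> h}"
proof
  fix k
  assume "k \<in> Ext \<Theta>"
  moreover have "within_inputs \<Theta> k" using calculation within_inputs_Ext within_inputs_if_mem by blast
  ultimately show "k \<in> Ext {h \<in> S. within_inputs \<Theta> h}"
    using assms unfolding Ext_filter_within_inputs by blast
qed

definition maximal_Ext :: "('e \<rightharpoonup> 'v) set \<Rightarrow> ('e \<rightharpoonup> 'v) set" where
  "maximal_Ext \<Theta> = {k \<in> Ext \<Theta>. \<forall>k'\<in>Ext \<Theta>. k \<subseteq>\<^sub>m k' \<longrightarrow> k' = k}"

definition total_histories :: "('e \<rightharpoonup> 'v) set \<Rightarrow> ('e \<rightharpoonup> 'v) set" where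
  "total_histories \<Theta> = {k. dom k = events \<Theta> \<and> (\<forall>\<omega>\<in>events \<Theta>. the (k \<omega>) \<in> inputs \<Theta> \<omega>)}"

lemma free_choice_iff: "free_choice \<Theta> \<longleftrightarrow> maximal_Ext \<Theta> = total_histories \<Theta>"
  unfolding free_choice_def maximal_Ext_def total_histories_def ..

lemma total_histories_eqI:
  "inputs S = inputs \<Theta> \<Longrightarrow> total_histories S = total_histories \<Theta>"
  unfolding total_histories_def events_eq_inputs_nonempty by simp

lemma extend_to_total_history:
  assumes "within_inputs \<Theta> k"
  obtains t where "t \<in> total_histories \<Theta>" "k \<subseteq>\<^sub>m t"
proof
  define base where "base \<omega> = (if \<omega> \<in> events \<Theta> then Some (SOME v. v \<in> inputs \<Theta> \<omega>) else None)"
    for \<omega>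
  show "k \<subseteq>\<^sub>m base ++ k" by simp
  have "dom k \<subseteq> events \<Theta>" using assms by (rule dom_subset_events_if_within_inputs)
  moreover have "dom base = events \<Theta>" unfolding base_def by (auto split: if_splits)
  ultimately have dom_eq: "dom (base ++ k) = events \<Theta>" by auto
  have "the ((base ++ k) \<omega>) \<in> inputs \<Theta> \<omega>" if "\<omega> \<in> events \<Theta>" for \<omega>
  proof (cases "k \<omega>")
    case None
    have "inputs \<Theta> \<omega> \<noteq> {}" using that unfolding events_eq_inputs_nonempty by blast
    then show ?thesis using None that unfolding base_def by (simp add: map_add_def some_in_eq)
  next
    case (Some v)
    then show ?thesis using assms unfolding within_inputs_def by simp
  qed
  with dom_eq show "base ++ k \<in> total_histories \<Theta>" unfolding total_histories_def by blast
qed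

lemma total_history_maximal:
  assumes "k \<in> total_histories \<Theta>" "within_inputs \<Theta> k'" "k \<subseteq>\<^sub>m k'"
  shows "k' = k"
proof (rule map_le_antisym[symmetric])
  have "dom k' \<subseteq> dom k"
    using dom_subset_events_if_within_inputs[OF assms(2)] assms(1) unfolding total_histories_def by simp
  then show "k' \<subseteq>\<^sub>m k" using assms(3) unfolding map_le_def by (metis subsetD)
qed (fact assms(3))

lemma free_choice_if_within_inputs:
  assumes "free_choice \<Theta>" "Ext \<Theta> \<subseteq> Ext T" "\<forall>h\<in>T. within_inputs \<Theta> h"
  shows "free_choice T"
proof -
  have maximal_eq: "maximal_Ext \<Theta> = total_histories \<Theta>" using assms(1) free_choice_iff by blast
  have within: "within_inputs \<Theta> k" if "k \<in> Ext T" for k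
    using that assms(3) by (rule within_inputs_Ext)
  have "inputs T = inputs \<Theta>"
    using assms(3) subset_Ext assms(2) by (intro inputs_eq_if_within_inputs) blast+
  then have "total_histories T = total_histories \<Theta>" by (rule total_histories_eqI)
  moreover have "maximal_Ext T = total_histories \<Theta>"
  proof (intro equalityI subsetI)
    fix k
    assume "k \<in> maximal_Ext T"
    then have k: "k \<in> Ext T" and maximal: "\<And>k'. k' \<in> Ext T \<Longrightarrow> k \<subseteq>\<^sub>m k' \<Longrightarrow> k' = k"
      unfolding maximal_Ext_def by auto
    obtain t where t: "t \<in> total_histories \<Theta>" "k \<subseteq>\<^sub>m t"
      using within[OF k] by (rule extend_to_total_history)
    have "t \<in> Ext T" using t(1) maximal_eq assms(2) unfolding maximal_Ext_def by blast
    then have "t = k" using t(2) by (rule maximal)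
    then show "k \<in> total_histories \<Theta>" using t(1) by simp
  next
    fix k
    assume k: "k \<in> total_histories \<Theta>"
    then have "k \<in> Ext T" using maximal_eq assms(2) unfolding maximal_Ext_def by blast
    moreover have "k' = k" if "k' \<in> Ext T" "k \<subseteq>\<^sub>m k'" for k'
      using k within[OF that(1)] that(2) by (rule total_history_maximal)
    ultimately show "k \<in> maximal_Ext T" unfolding maximal_Ext_def by blast
  qed
  ultimately show ?thesis unfolding free_choice_iff by simp
qed

lemma vee_prime_subset: "vee_prime S \<Longrightarrow> T \<subseteq> S \<Longrightarrow> vee_prime T"
  unfolding vee_prime_def by blast

lemma space_of_input_histories_subset:
  "space_of_input_histories S \<Longrightarrow> T \<subseteq> S \<Longrightarrow> space_of_input_histories T"
  unfolding space_of_input_histories_def using finite_subset vee_prime_subset by blast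

lemma tips_filter_within_inputs:
  assumes "within_inputs \<Theta> h"
  shows "tips {h' \<in> S. within_inputs \<Theta> h'} h = tips S h"
proof -
  have "k \<in> Ext {h' \<in> S. within_inputs \<Theta> h'} \<and> k \<subseteq>\<^sub>m h \<and> k \<noteq> h \<longleftrightarrow> k \<in> Ext S \<and> k \<subseteq>\<^sub>m h \<and> k \<noteq> h"
    for k
    using within_inputs_map_le[OF assms] unfolding Ext_filter_within_inputs by blast
  then show ?thesis unfolding tips_def by simp
qed

lemma causally_complete_filter_within_inputs:
  assumes "causally_complete S" "free_choice \<Theta>" "Ext \<Theta> \<subseteq> Ext S"
  shows "causally_complete {h \<in> S. within_inputs \<Theta> h}"
  unfolding causally_complete_def
proof
  show "free_choice {h \<in> S. within_inputs \<Theta> h}"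
    using assms(2) Ext_subset_filter_within_inputs[OF assms(3)]
    by (rule free_choice_if_within_inputs) blast
  show "\<forall>h \<in> {h \<in> S. within_inputs \<Theta> h}. card (tips {h \<in> S. within_inputs \<Theta> h} h) = 1"
    using assms(1) unfolding causally_complete_def by (simp add: tips_filter_within_inputs)
qed

theorem proposition19:
  fixes \<Theta> \<Theta>h :: "('e \<rightharpoonup> 'v) set"
  assumes "space_of_input_histories \<Theta>"
    and "free_choice \<Theta>"
    and "\<Theta>h \<in> causal_completions \<Theta>"
  shows "events \<Theta>h = events \<Theta> \<and> (\<forall>\<omega>\<in>events \<Theta>. inputs \<Theta>h \<omega> = inputs \<Theta> \<omega>)"
proof -
  have space: "space_of_input_histories \<Theta>h" and below: "Ext \<Theta> \<subseteq> Ext \<Theta>h"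
    and complete: "causally_complete \<Theta>h"
    and maximal: "\<And>\<Theta>'. space_of_input_histories \<Theta>' \<Longrightarrow> Ext \<Theta> \<subseteq> Ext \<Theta>' \<Longrightarrow>
      causally_complete \<Theta>' \<Longrightarrow> Ext \<Theta>' \<subseteq> Ext \<Theta>h \<Longrightarrow> Ext \<Theta>h \<subseteq> Ext \<Theta>'"
    using assms(3) unfolding causal_completions_def space_le_def by auto
  define \<Theta>' where "\<Theta>' = {h \<in> \<Theta>h. within_inputs \<Theta> h}"
  have "Ext \<Theta>h \<subseteq> Ext \<Theta>'"
  proof (rule maximal)
    show "space_of_input_histories \<Theta>'"
      using space by (rule space_of_input_histories_subset) (simp add: \<Theta>'_def)
    show "Ext \<Theta> \<subseteq> Ext \<Theta>'" unfolding \<Theta>'_def using below by (rule Ext_subset_filter_within_inputs)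
    show "causally_complete \<Theta>'"
      unfolding \<Theta>'_def using complete assms(2) below by (rule causally_complete_filter_within_inputs)
    show "Ext \<Theta>' \<subseteq> Ext \<Theta>h" unfolding \<Theta>'_def by (rule Ext_mono) blast
  qed
  then have "\<forall>h\<in>\<Theta>h. within_inputs \<Theta> h"
    using subset_Ext[of \<Theta>h] unfolding \<Theta>'_def Ext_filter_within_inputs by blast
  moreover have "\<Theta> \<subseteq> Ext \<Theta>h" using subset_Ext below by blast
  ultimately have "inputs \<Theta>h = inputs \<Theta>" by (rule inputs_eq_if_within_inputs)
  then show ?thesis by (simp add: events_eq_inputs_nonempty)
qed

end
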